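(* Let $(U,\|\cdot\|)$ be a uniformly convex Banach space and let $Q\subseteq U$ be a nonempty, bounded, closed, convex set. Let $r>0$ and let $\{\beta_n\}_{n\in\mathbb{N}}$ be a sequence of positive real numbers with $\lim_{n\to\infty}\beta_n=1$. Suppose $T:Q\to Q$ satisfies: for all $p,q\in Q$ with $\|p-q\|<r$, $$\|T^np-T^nq\|\leq \beta_n\|p-q\|\quad\text{for every } n\in\mathbb{N}.$$ If there exists $q_0\in Q$ such that the asymptotic radius of the sequence $\{T^nq_0\}_n$ relative to $Q$ is less than $r$, then $T$ has a fixed point. Furthermore, the set of fixed points of $T$ is closed.
   Context: A map $T$ as in the statement is called uniformly local asymptotic nonexpansive. For a bounded sequence $\{x_n\}_n$ in $U$, its asymptotic radius relative to $Q$ is $\rho=\inf_{y\in Q}\limsup_{n\to\infty}\|x_n-y\|$. *)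

theory Defs
  imports "HOL-Analysis.Analysis"
begin

definition uniformly_convex_space :: "'a::real_normed_vector itself \<Rightarrow> bool" where
  "uniformly_convex_space _ \<longleftrightarrow>
     (\<forall>\<epsilon>>0. \<exists>\<delta>>0. \<forall>x y::'a. norm x \<le> 1 \<longrightarrow> norm y \<le> 1 \<longrightarrow> norm (x - y) \<ge> \<epsilon>
          \<longrightarrow> norm ((1/2) *\<^sub>R (x + y)) \<le> 1 - \<delta>)"

definition asymptotic_radius :: "(nat \<Rightarrow> 'a::real_normed_vector) \<Rightarrow> 'a set \<Rightarrow> ereal" where
  "asymptotic_radius x Q = (INF y\<in>Q. limsup (\<lambda>n. ereal (norm (x n - y))))"

end

theory Submission
  imports Defs
begin

(*
  Let x n = T^n q0 and F y = limsup ||x n - y||, whose infimum over Q is rho < r. By uniform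
  convexity, two points of Q with F-values near rho have a midpoint with F-value below rho unless
  they are close to each other; hence minimizing sequences are Cauchy and converge to an asymptotic
  centre z with F z = rho. Since eventually ||x n - z|| < r, the local estimate gives
  F (T^m z) <= beta m * rho, which tends to rho, so the iterates T^m z are again minimizing and
  converge to z. T is continuous (the case n = 1), so z is a fixed point and the fixed point set
  is closed.
*)

lemma funpow_in_if_image_subset: "f ` Q \<subseteq> Q \<Longrightarrow> p \<in> Q \<Longrightarrow> (f ^^ n) p \<in> Q"
  by (induction n) auto

definition asymptotic_radius_at :: "(nat \<Rightarrow> 'a::real_normed_vector) \<Rightarrow> 'a \<Rightarrow> ereal" where
  "asymptotic_radius_at x y = limsup (\<lambda>n. ereal (norm (x n - y)))"

lemma asymptotic_radius_eq_INF: "asymptotic_radius x Q = (INF y\<in>Q. asymptotic_radius_at x y)"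
  by (simp add: asymptotic_radius_def asymptotic_radius_at_def)

lemma asymptotic_radius_at_nonneg: "0 \<le> asymptotic_radius_at x y"
  unfolding asymptotic_radius_at_def by (rule le_Limsup) auto

lemma asymptotic_radius_nonneg: "0 \<le> asymptotic_radius x Q"
  unfolding asymptotic_radius_eq_INF by (rule INF_greatest) (rule asymptotic_radius_at_nonneg)

lemma asymptotic_radius_le_at: "y \<in> Q \<Longrightarrow> asymptotic_radius x Q \<le> asymptotic_radius_at x y"
  unfolding asymptotic_radius_eq_INF by (rule INF_lower)

lemma eventually_norm_less_if_asymptotic_radius_at_less:
  "asymptotic_radius_at x y < ereal a \<Longrightarrow> eventually (\<lambda>n. norm (x n - y) < a) sequentially"
  unfolding asymptotic_radius_at_def using Limsup_lessD by fastforce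

lemma asymptotic_radius_at_le_if_eventually:
  "eventually (\<lambda>n. norm (x n - y) \<le> c) sequentially \<Longrightarrow> asymptotic_radius_at x y \<le> ereal c"
  unfolding asymptotic_radius_at_def by (rule Limsup_bounded) simp

lemma asymptotic_radius_at_shift: "asymptotic_radius_at (\<lambda>n. x (n + k)) y = asymptotic_radius_at x y"
  unfolding asymptotic_radius_at_def by (rule limsup_shift_k)

lemma norm_diff_le_asymptotic_radius_at:
  "ereal (norm (u - v)) \<le> asymptotic_radius_at x u + asymptotic_radius_at x v"
proof -
  have "norm (u - v) \<le> norm (x n - u) + norm (x n - v)" for n
    using norm_triangle_ineq4[of "x n - v" "x n - u"] by (simp add: norm_minus_commute)
  then have "ereal (norm (u - v)) \<le> limsup (\<lambda>n. ereal (norm (x n - u)) + ereal (norm (x n - v)))"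
    by (intro le_Limsup) auto
  also have "\<dots> \<le> asymptotic_radius_at x u + asymptotic_radius_at x v"
    unfolding asymptotic_radius_at_def by (rule ereal_limsup_add_mono)
  finally show ?thesis .
qed

lemma asymptotic_radius_at_le_add_norm:
  "asymptotic_radius_at x u \<le> asymptotic_radius_at x v + ereal (norm (u - v))"
proof -
  have "norm (x n - u) \<le> norm (x n - v) + norm (u - v)" for n
    using norm_triangle_ineq[of "x n - v" "v - u"] by (simp add: norm_minus_commute)
  then have "asymptotic_radius_at x u \<le> limsup (\<lambda>n. ereal (norm (x n - v)) + ereal (norm (u - v)))"
    unfolding asymptotic_radius_at_def by (intro Limsup_mono) auto
  also have "\<dots> = asymptotic_radius_at x v + ereal (norm (u - v))"
    unfolding asymptotic_radius_at_def by (rule Limsup_add_ereal_right) auto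
  finally show ?thesis .
qed

lemma asymptotic_radius_at_locally_lipschitz_image:
  assumes "c \<ge> 0"
    and lip: "\<And>p q. p \<in> Q \<Longrightarrow> q \<in> Q \<Longrightarrow> norm (p - q) < r \<Longrightarrow> norm (S p - S q) \<le> c * norm (p - q)"
    and xQ: "\<And>n. x n \<in> Q" and "z \<in> Q" and "asymptotic_radius_at x z < ereal r"
  shows "asymptotic_radius_at (\<lambda>n. S (x n)) (S z) \<le> ereal c * asymptotic_radius_at x z"
proof -
  have "eventually (\<lambda>n. norm (x n - z) < r) sequentially"
    by (rule eventually_norm_less_if_asymptotic_radius_at_less) fact
  then have "eventually (\<lambda>n. ereal (norm (S (x n) - S z)) \<le> ereal c * ereal (norm (x n - z))) sequentially"
    by eventually_elim (use lip xQ \<open>z \<in> Q\<close> in auto)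
  then have "asymptotic_radius_at (\<lambda>n. S (x n)) (S z) \<le> limsup (\<lambda>n. ereal c * ereal (norm (x n - z)))"
    unfolding asymptotic_radius_at_def by (rule Limsup_mono)
  also have "\<dots> = ereal c * asymptotic_radius_at x z"
    unfolding asymptotic_radius_at_def using \<open>c \<ge> 0\<close> by (rule limsup_ereal_mult_left)
  finally show ?thesis .
qed

lemma asymptotic_radius_at_orbit_iterate:
  assumes "c \<ge> 0" "T ` Q \<subseteq> Q" "p \<in> Q" "z \<in> Q"
    and lip: "\<And>u v. u \<in> Q \<Longrightarrow> v \<in> Q \<Longrightarrow> norm (u - v) < r \<Longrightarrow>
      norm ((T ^^ m) u - (T ^^ m) v) \<le> c * norm (u - v)"
    and "asymptotic_radius_at (\<lambda>n. (T ^^ n) p) z < ereal r"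
  shows "asymptotic_radius_at (\<lambda>n. (T ^^ n) p) ((T ^^ m) z) \<le> ereal c * asymptotic_radius_at (\<lambda>n. (T ^^ n) p) z"
proof -
  have "(\<lambda>n. (T ^^ m) ((T ^^ n) p)) = (\<lambda>n. (T ^^ (n + m)) p)"
    by (metis add.commute comp_apply funpow_add)
  then have "asymptotic_radius_at (\<lambda>n. (T ^^ n) p) ((T ^^ m) z) =
      asymptotic_radius_at (\<lambda>n. (T ^^ m) ((T ^^ n) p)) ((T ^^ m) z)"
    using asymptotic_radius_at_shift[of "\<lambda>n. (T ^^ n) p" m] by simp
  also have "\<dots> \<le> ereal c * asymptotic_radius_at (\<lambda>n. (T ^^ n) p) z"
    by (rule asymptotic_radius_at_locally_lipschitz_image[OF \<open>c \<ge> 0\<close> lip])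
      (use assms funpow_in_if_image_subset in auto)
  finally show ?thesis .
qed

lemma uniformly_convex_space_midpoint:
  assumes ucs: "uniformly_convex_space TYPE('a::real_normed_vector)" and "\<epsilon> > 0"
  obtains \<delta> where "\<delta> > 0"
    "\<And>(p::'a) u v a. a > 0 \<Longrightarrow> norm (p - u) \<le> a \<Longrightarrow> norm (p - v) \<le> a \<Longrightarrow> \<epsilon> * a \<le> norm (u - v) \<Longrightarrow>
       norm (p - midpoint u v) \<le> (1 - \<delta>) * a"
proof -
  obtain \<delta> where "\<delta> > 0" and uc: "\<And>x y::'a. norm x \<le> 1 \<Longrightarrow> norm y \<le> 1 \<Longrightarrow> \<epsilon> \<le> norm (x - y) \<Longrightarrow>
      norm ((1/2) *\<^sub>R (x + y)) \<le> 1 - \<delta>"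
    using ucs \<open>\<epsilon> > 0\<close> unfolding uniformly_convex_space_def by blast
  have "norm (p - midpoint u v) \<le> (1 - \<delta>) * a"
    if a: "a > 0" and pu: "norm (p - u) \<le> a" and pv: "norm (p - v) \<le> a" and uv: "\<epsilon> * a \<le> norm (u - v)"
    for p u v :: 'a and a
  proof -
    define s where "s = (1 / a) *\<^sub>R (p - u)"
    define t where "t = (1 / a) *\<^sub>R (p - v)"
    have "norm s \<le> 1" "norm t \<le> 1"
      using a pu pv by (simp_all add: s_def t_def divide_simps)
    moreover have "norm (s - t) = norm (u - v) / a"
      using a by (simp add: s_def t_def norm_minus_commute flip: scaleR_diff_right)
    then have "\<epsilon> \<le> norm (s - t)"
      using a uv by (simp add: pos_le_divide_eq)
    ultimately have "norm ((1/2) *\<^sub>R (s + t)) \<le> 1 - \<delta>"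
      by (rule uc)
    moreover have "p - midpoint u v = (1/2) *\<^sub>R ((p - u) + (p - v))"
      by (simp add: midpoint_def algebra_simps flip: scaleR_add_left)
    then have "(1/2) *\<^sub>R (s + t) = (1 / a) *\<^sub>R (p - midpoint u v)"
      by (simp add: s_def t_def scaleR_add_right mult.commute)
    ultimately show ?thesis
      using a by (simp add: divide_simps mult.commute)
  qed
  with \<open>\<delta> > 0\<close> show ?thesis by (rule that)
qed

lemma asymptotic_radius_at_midpoint:
  fixes x :: "nat \<Rightarrow> 'a::real_normed_vector"
  assumes ucs: "uniformly_convex_space TYPE('a)" and "\<epsilon> > 0"
  obtains \<delta> where "\<delta> > 0"
    "\<And>u v d. d > 0 \<Longrightarrow> asymptotic_radius_at x u \<le> ereal d \<Longrightarrow> asymptotic_radius_at x v \<le> ereal d \<Longrightarrow>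
       \<epsilon> * d \<le> norm (u - v) \<Longrightarrow> asymptotic_radius_at x (midpoint u v) \<le> ereal ((1 - \<delta>) * d)"
proof -
  obtain \<delta> where "\<delta> > 0" and mid: "\<And>(p::'a) u v a. a > 0 \<Longrightarrow> norm (p - u) \<le> a \<Longrightarrow> norm (p - v) \<le> a \<Longrightarrow>
      \<epsilon> / 2 * a \<le> norm (u - v) \<Longrightarrow> norm (p - midpoint u v) \<le> (1 - \<delta>) * a"
    using uniformly_convex_space_midpoint[OF ucs, of "\<epsilon> / 2"] \<open>\<epsilon> > 0\<close> by auto
  define t where "t = min 1 (\<delta> / 2)"
  have t: "0 < t" "t \<le> 1" "t \<le> \<delta> / 2"
    using \<open>\<delta> > 0\<close> by (auto simp: t_def)
  \<comment> \<open>the slack factor \<open>1 + t\<close> turns the strict bounds of the limsups into bounds for all large \<open>n\<close>\<close>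
  have slack: "(1 - \<delta>) * (1 + t) \<le> 1 - \<delta> / 2"
  proof -
    have "0 \<le> \<delta> * t"
      using \<open>\<delta> > 0\<close> t by simp
    moreover have "(1 - \<delta>) * (1 + t) = 1 - \<delta> + t - \<delta> * t"
      by (simp add: algebra_simps)
    ultimately show ?thesis
      using t by linarith
  qed
  have "asymptotic_radius_at x (midpoint u v) \<le> ereal ((1 - \<delta> / 2) * d)"
    if d: "d > 0" and u: "asymptotic_radius_at x u \<le> ereal d" and v: "asymptotic_radius_at x v \<le> ereal d"
      and uv: "\<epsilon> * d \<le> norm (u - v)" for u v d
  proof (rule asymptotic_radius_at_le_if_eventually)
    define a where "a = (1 + t) * d"
    have "d < a" "a > 0"
      using d t by (simp_all add: a_def)
    have "\<epsilon> / 2 * a \<le> \<epsilon> * d"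
      using d t \<open>\<epsilon> > 0\<close> by (simp add: a_def)
    with uv have uv': "\<epsilon> / 2 * a \<le> norm (u - v)"
      by linarith
    have bound: "(1 - \<delta>) * a \<le> (1 - \<delta> / 2) * d"
      using slack d unfolding a_def by (simp add: mult.assoc[symmetric] mult_right_mono)
    have "eventually (\<lambda>n. norm (x n - u) < a) sequentially"
      by (rule eventually_norm_less_if_asymptotic_radius_at_less)
        (use u \<open>d < a\<close> in \<open>auto intro: le_less_trans\<close>)
    moreover have "eventually (\<lambda>n. norm (x n - v) < a) sequentially"
      by (rule eventually_norm_less_if_asymptotic_radius_at_less)
        (use v \<open>d < a\<close> in \<open>auto intro: le_less_trans\<close>)
    ultimately show "eventually (\<lambda>n. norm (x n - midpoint u v) \<le> (1 - \<delta> / 2) * d) sequentially"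
    proof eventually_elim
      case (elim n)
      then have "norm (x n - midpoint u v) \<le> (1 - \<delta>) * a"
        using mid[OF \<open>a > 0\<close> _ _ uv'] by simp
      with bound show ?case
        by linarith
    qed
  qed
  moreover have "\<delta> / 2 > 0"
    using \<open>\<delta> > 0\<close> by simp
  ultimately show ?thesis
    using that by blast
qed

lemma asymptotic_radius_at_sublevel_small:
  fixes x :: "nat \<Rightarrow> 'a::real_normed_vector"
  assumes ucs: "uniformly_convex_space TYPE('a)" and "convex Q"
    and lower: "\<And>y. y \<in> Q \<Longrightarrow> ereal \<rho> \<le> asymptotic_radius_at x y" and "e > 0"
  obtains \<eta> where "\<eta> > 0"
    "\<And>u v. u \<in> Q \<Longrightarrow> v \<in> Q \<Longrightarrow> asymptotic_radius_at x u < ereal (\<rho> + \<eta>) \<Longrightarrow>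
       asymptotic_radius_at x v < ereal (\<rho> + \<eta>) \<Longrightarrow> norm (u - v) < e"
proof (cases "\<rho> \<le> 0")
  case True
  have "norm (u - v) < e"
    if "asymptotic_radius_at x u < ereal (\<rho> + e / 4)" "asymptotic_radius_at x v < ereal (\<rho> + e / 4)" for u v
  proof -
    have "ereal (norm (u - v)) < ereal (\<rho> + e / 4) + ereal (\<rho> + e / 4)"
      using norm_diff_le_asymptotic_radius_at[of u v x] that ereal_add_strict_mono2 le_less_trans by blast
    then show ?thesis
      using True \<open>e > 0\<close> by simp
  qed
  moreover have "e / 4 > 0"
    using \<open>e > 0\<close> by simp
  ultimately show ?thesis
    using that by blast
next
  case False
  define \<epsilon> where "\<epsilon> = e / (\<rho> + 1)"
  have "\<epsilon> > 0"
    using False \<open>e > 0\<close> by (simp add: \<epsilon>_def)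
  obtain \<delta> where "\<delta> > 0" and mid: "\<And>u v d. d > 0 \<Longrightarrow> asymptotic_radius_at x u \<le> ereal d \<Longrightarrow>
      asymptotic_radius_at x v \<le> ereal d \<Longrightarrow> \<epsilon> * d \<le> norm (u - v) \<Longrightarrow>
      asymptotic_radius_at x (midpoint u v) \<le> ereal ((1 - \<delta>) * d)"
    using asymptotic_radius_at_midpoint[OF ucs \<open>\<epsilon> > 0\<close>] by blast
  define \<eta> where "\<eta> = min 1 (\<delta> * \<rho> / 2)"
  have \<eta>: "0 < \<eta>" "\<eta> \<le> 1" "\<eta> \<le> \<delta> * \<rho> / 2"
    using False \<open>\<delta> > 0\<close> by (auto simp: \<eta>_def)
  \<comment> \<open>two far apart points of the sublevel set would have a midpoint below the infimum\<close>
  have "norm (u - v) < e"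
    if uQ: "u \<in> Q" and vQ: "v \<in> Q" and u: "asymptotic_radius_at x u < ereal (\<rho> + \<eta>)"
      and v: "asymptotic_radius_at x v < ereal (\<rho> + \<eta>)" for u v
  proof (rule ccontr)
    assume "\<not> norm (u - v) < e"
    moreover have "\<epsilon> * (\<rho> + \<eta>) \<le> e"
      using \<eta> False \<open>e > 0\<close> by (simp add: \<epsilon>_def divide_simps)
    ultimately have "\<epsilon> * (\<rho> + \<eta>) \<le> norm (u - v)"
      by linarith
    then have "asymptotic_radius_at x (midpoint u v) \<le> ereal ((1 - \<delta>) * (\<rho> + \<eta>))"
      using mid u v \<eta> False by (simp add: less_imp_le)
    moreover have "(1 - \<delta>) * (\<rho> + \<eta>) < \<rho>"
    proof -
      have "0 < \<delta> * \<eta>"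
        using \<open>\<delta> > 0\<close> \<eta> by simp
      moreover have "(1 - \<delta>) * (\<rho> + \<eta>) = \<rho> + \<eta> - \<delta> * \<rho> - \<delta> * \<eta>"
        by (simp add: algebra_simps)
      ultimately show ?thesis
        using \<eta> \<open>\<delta> > 0\<close> False by linarith
    qed
    moreover have "midpoint u v \<in> Q"
      using \<open>convex Q\<close> uQ vQ midpoint_in_closed_segment convex_contains_segment by blast
    ultimately show False
      using lower by (meson ereal_less_eq(3) not_le order_trans)
  qed
  with \<eta>(1) show ?thesis
    using that by blast
qed

lemma eventually_asymptotic_radius_at_less_if_limsup_le:
  assumes "limsup (\<lambda>k. asymptotic_radius_at x (y k)) \<le> ereal \<rho>" and "\<eta> > 0"
  shows "eventually (\<lambda>k. asymptotic_radius_at x (y k) < ereal (\<rho> + \<eta>)) sequentially"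
  using assms by (intro Limsup_lessD) (auto intro: le_less_trans)

lemma Cauchy_if_limsup_asymptotic_radius_at_le:
  fixes x :: "nat \<Rightarrow> 'a::real_normed_vector"
  assumes ucs: "uniformly_convex_space TYPE('a)" and "convex Q"
    and lower: "\<And>y. y \<in> Q \<Longrightarrow> ereal \<rho> \<le> asymptotic_radius_at x y" and yQ: "\<And>k. y k \<in> Q"
    and y: "limsup (\<lambda>k. asymptotic_radius_at x (y k)) \<le> ereal \<rho>"
  shows "Cauchy y"
proof (rule CauchyI)
  fix e :: real
  assume "e > 0"
  then obtain \<eta> where "\<eta> > 0" and small: "\<And>u v. u \<in> Q \<Longrightarrow> v \<in> Q \<Longrightarrow>
      asymptotic_radius_at x u < ereal (\<rho> + \<eta>) \<Longrightarrow> asymptotic_radius_at x v < ereal (\<rho> + \<eta>) \<Longrightarrow>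
      norm (u - v) < e"
    using asymptotic_radius_at_sublevel_small[OF ucs \<open>convex Q\<close> lower] by blast
  obtain M where "\<And>k. k \<ge> M \<Longrightarrow> asymptotic_radius_at x (y k) < ereal (\<rho> + \<eta>)"
    using eventually_asymptotic_radius_at_less_if_limsup_le[OF y \<open>\<eta> > 0\<close>]
    unfolding eventually_sequentially by blast
  then show "\<exists>M. \<forall>m\<ge>M. \<forall>n\<ge>M. norm (y m - y n) < e"
    using small yQ by blast
qed

lemma tendsto_if_limsup_asymptotic_radius_at_le:
  fixes x :: "nat \<Rightarrow> 'a::real_normed_vector"
  assumes ucs: "uniformly_convex_space TYPE('a)" and "convex Q"
    and lower: "\<And>y. y \<in> Q \<Longrightarrow> ereal \<rho> \<le> asymptotic_radius_at x y" and yQ: "\<And>k. y k \<in> Q"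
    and y: "limsup (\<lambda>k. asymptotic_radius_at x (y k)) \<le> ereal \<rho>"
    and "z \<in> Q" and z: "asymptotic_radius_at x z \<le> ereal \<rho>"
  shows "y \<longlonglongrightarrow> z"
proof (rule LIMSEQ_I)
  fix e :: real
  assume "e > 0"
  then obtain \<eta> where "\<eta> > 0" and small: "\<And>u v. u \<in> Q \<Longrightarrow> v \<in> Q \<Longrightarrow>
      asymptotic_radius_at x u < ereal (\<rho> + \<eta>) \<Longrightarrow> asymptotic_radius_at x v < ereal (\<rho> + \<eta>) \<Longrightarrow>
      norm (u - v) < e"
    using asymptotic_radius_at_sublevel_small[OF ucs \<open>convex Q\<close> lower] by blast
  have "asymptotic_radius_at x z < ereal (\<rho> + \<eta>)"
    using z \<open>\<eta> > 0\<close> by (auto intro: le_less_trans)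
  moreover obtain M where "\<And>k. k \<ge> M \<Longrightarrow> asymptotic_radius_at x (y k) < ereal (\<rho> + \<eta>)"
    using eventually_asymptotic_radius_at_less_if_limsup_le[OF y \<open>\<eta> > 0\<close>]
    unfolding eventually_sequentially by blast
  ultimately show "\<exists>M. \<forall>k\<ge>M. norm (y k - z) < e"
    using small yQ \<open>z \<in> Q\<close> by blast
qed

lemma asymptotic_center_exists:
  fixes x :: "nat \<Rightarrow> 'a::banach"
  assumes ucs: "uniformly_convex_space TYPE('a)" and "closed Q" "convex Q"
    and \<rho>: "asymptotic_radius x Q = ereal \<rho>"
  obtains z where "z \<in> Q" "asymptotic_radius_at x z = ereal \<rho>"
proof -
  have lower: "ereal \<rho> \<le> asymptotic_radius_at x y" if "y \<in> Q" for y
    using asymptotic_radius_le_at[OF that, of x] \<rho> by simp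
  have "\<exists>y\<in>Q. asymptotic_radius_at x y < ereal (\<rho> + inverse (Suc k))" for k
  proof -
    have "(INF y\<in>Q. asymptotic_radius_at x y) < ereal (\<rho> + inverse (Suc k))"
      using \<rho> unfolding asymptotic_radius_eq_INF by simp
    then show ?thesis
      by (simp add: INF_less_iff)
  qed
  then obtain y where yQ: "\<And>k. y k \<in> Q"
    and y_less: "\<And>k. asymptotic_radius_at x (y k) < ereal (\<rho> + inverse (Suc k))"
    by metis
  have "limsup (\<lambda>k. asymptotic_radius_at x (y k)) \<le> limsup (\<lambda>k. ereal (\<rho> + inverse (Suc k)))"
    using y_less by (intro Limsup_mono) (simp add: less_imp_le)
  also have "\<dots> = ereal \<rho>"
  proof (intro lim_imp_Limsup)
    have "(\<lambda>k. \<rho> + inverse (real (Suc k))) \<longlonglongrightarrow> \<rho> + 0"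
      by (intro tendsto_add tendsto_const LIMSEQ_inverse_real_of_nat)
    then show "(\<lambda>k. ereal (\<rho> + inverse (Suc k))) \<longlonglongrightarrow> ereal \<rho>"
      by simp
  qed simp
  finally have y: "limsup (\<lambda>k. asymptotic_radius_at x (y k)) \<le> ereal \<rho>" .
  obtain z where lim: "y \<longlonglongrightarrow> z"
    using Cauchy_if_limsup_asymptotic_radius_at_le[OF ucs \<open>convex Q\<close> lower yQ y]
    by (auto simp: Cauchy_convergent_iff convergent_def)
  have "z \<in> Q"
    using closed_sequentially[OF \<open>closed Q\<close> yQ lim] .
  have "asymptotic_radius_at x z \<le> ereal \<rho>"
  proof (rule ereal_le_epsilon2)
    fix e :: real
    assume "e > 0"
    have "eventually (\<lambda>k. asymptotic_radius_at x (y k) < ereal (\<rho> + e / 2)) sequentially"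
      using \<open>e > 0\<close> by (intro eventually_asymptotic_radius_at_less_if_limsup_le[OF y]) simp
    moreover have "eventually (\<lambda>k. dist (y k) z < e / 2) sequentially"
      using \<open>e > 0\<close> by (intro tendstoD[OF lim]) simp
    ultimately obtain k where k: "asymptotic_radius_at x (y k) < ereal (\<rho> + e / 2)" "dist (y k) z < e / 2"
      using eventually_happens'[OF sequentially_bot eventually_conj] by blast
    have "asymptotic_radius_at x z \<le> asymptotic_radius_at x (y k) + ereal (norm (z - y k))"
      by (rule asymptotic_radius_at_le_add_norm)
    also have "\<dots> \<le> ereal (\<rho> + e / 2) + ereal (e / 2)"
      using k by (intro add_mono) (auto simp: dist_norm norm_minus_commute less_imp_le)
    finally show "asymptotic_radius_at x z \<le> ereal \<rho> + ereal e"
      by (simp add: add.commute)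
  qed
  with lower \<open>z \<in> Q\<close> show ?thesis
    using that by (simp add: antisym)
qed

lemma continuous_on_if_locally_lipschitz:
  assumes "r > 0"
    and lip: "\<And>p q. p \<in> Q \<Longrightarrow> q \<in> Q \<Longrightarrow> norm (p - q) < r \<Longrightarrow> norm (f p - f q) \<le> c * norm (p - q)"
  shows "continuous_on Q f"
  unfolding continuous_on_iff
proof (intro ballI allI impI)
  fix p and e :: real
  assume "p \<in> Q" "e > 0"
  show "\<exists>d>0. \<forall>q\<in>Q. dist q p < d \<longrightarrow> dist (f q) (f p) < e"
  proof (intro exI[of _ "min r (e / (\<bar>c\<bar> + 1))"] conjI ballI impI)
    show "min r (e / (\<bar>c\<bar> + 1)) > 0"
      using \<open>r > 0\<close> \<open>e > 0\<close> by simp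
    fix q
    assume "q \<in> Q" and close: "dist q p < min r (e / (\<bar>c\<bar> + 1))"
    have "norm (f q - f p) \<le> c * norm (q - p)"
      using lip \<open>q \<in> Q\<close> \<open>p \<in> Q\<close> close by (simp add: dist_norm)
    also have "\<dots> \<le> (\<bar>c\<bar> + 1) * norm (q - p)"
      by (intro mult_right_mono) auto
    also have "\<dots> < (\<bar>c\<bar> + 1) * (e / (\<bar>c\<bar> + 1))"
      using close by (intro mult_strict_left_mono) (auto simp: dist_norm)
    also have "\<dots> = e"
      by simp
    finally show "dist (f q) (f p) < e"
      by (simp add: dist_norm)
  qed
qed

lemma fixpoint_if_iterates_tendsto:
  fixes f :: "'a::t2_space \<Rightarrow> 'a"
  assumes "continuous_on Q f" "f ` Q \<subseteq> Q" "p \<in> Q" "z \<in> Q" and lim: "(\<lambda>n. (f ^^ n) p) \<longlonglongrightarrow> z"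
  shows "f z = z"
proof -
  have "(\<lambda>n. f ((f ^^ n) p)) \<longlonglongrightarrow> f z"
    by (rule continuous_on_tendsto_compose[OF assms(1) lim \<open>z \<in> Q\<close>])
      (simp add: funpow_in_if_image_subset[OF assms(2,3)])
  moreover have "(\<lambda>n. f ((f ^^ n) p)) \<longlonglongrightarrow> z"
    using LIMSEQ_Suc[OF lim] by (simp only: funpow.simps(2) comp_def)
  ultimately show ?thesis
    by (rule LIMSEQ_unique)
qed

lemma closed_fixpoints:
  fixes f :: "'a::real_normed_vector \<Rightarrow> 'a"
  assumes "continuous_on Q f" "closed Q"
  shows "closed {x \<in> Q. f x = x}"
proof -
  have "closed {x \<in> Q. f x - x = 0}"
    by (intro continuous_closed_preimage_constant continuous_on_diff continuous_on_id assms)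
  then show ?thesis
    by simp
qed

lemma iterates_tendsto_asymptotic_center:
  fixes T :: "'a::real_normed_vector \<Rightarrow> 'a"
  assumes ucs: "uniformly_convex_space TYPE('a)" and "convex Q" and TQ: "T ` Q \<subseteq> Q"
    and "p \<in> Q" and "z \<in> Q" and "\<rho> < r"
    and \<rho>: "asymptotic_radius (\<lambda>n. (T ^^ n) p) Q = ereal \<rho>"
    and z: "asymptotic_radius_at (\<lambda>n. (T ^^ n) p) z = ereal \<rho>"
    and \<beta>: "\<And>n. \<beta> n \<ge> 0" "\<beta> \<longlonglongrightarrow> 1"
    and Tlip: "\<And>u v n. u \<in> Q \<Longrightarrow> v \<in> Q \<Longrightarrow> norm (u - v) < r \<Longrightarrow> n \<ge> 1 \<Longrightarrow>
                 norm ((T ^^ n) u - (T ^^ n) v) \<le> \<beta> n * norm (u - v)"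
  shows "(\<lambda>m. (T ^^ m) z) \<longlonglongrightarrow> z"
proof -
  define x where "x = (\<lambda>n. (T ^^ n) p)"
  have "eventually (\<lambda>m. asymptotic_radius_at x ((T ^^ m) z) \<le> ereal (\<beta> m * \<rho>)) sequentially"
    using eventually_ge_at_top[of 1]
  proof eventually_elim
    case (elim m)
    have "asymptotic_radius_at x ((T ^^ m) z) \<le> ereal (\<beta> m) * asymptotic_radius_at x z"
      unfolding x_def
      by (rule asymptotic_radius_at_orbit_iterate[OF \<beta>(1) TQ \<open>p \<in> Q\<close> \<open>z \<in> Q\<close>])
        (use Tlip elim z \<open>\<rho> < r\<close> in auto)
    then show ?case
      by (simp add: z x_def)
  qed
  then have "limsup (\<lambda>m. asymptotic_radius_at x ((T ^^ m) z)) \<le> limsup (\<lambda>m. ereal (\<beta> m * \<rho>))"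
    by (rule Limsup_mono)
  also have "\<dots> = ereal \<rho>"
    using \<beta>(2) by (intro lim_imp_Limsup) (auto intro!: tendsto_eq_intros)
  finally have limsup: "limsup (\<lambda>m. asymptotic_radius_at x ((T ^^ m) z)) \<le> ereal \<rho>" .
  have lower: "ereal \<rho> \<le> asymptotic_radius_at x y" if "y \<in> Q" for y
    using asymptotic_radius_le_at[OF that, of x] \<rho> by (simp add: x_def)
  show ?thesis
    by (rule tendsto_if_limsup_asymptotic_radius_at_le[OF ucs \<open>convex Q\<close> lower _ limsup \<open>z \<in> Q\<close>])
      (use z funpow_in_if_image_subset[OF TQ \<open>z \<in> Q\<close>] in \<open>auto simp: x_def\<close>)
qed

theorem mainTheorem1:
  fixes Q :: "'a::banach set" and T :: "'a \<Rightarrow> 'a" and r :: real and \<beta> :: "nat \<Rightarrow> real"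
  assumes ucs: "uniformly_convex_space TYPE('a)"
    and Q: "Q \<noteq> {}" "bounded Q" "closed Q" "convex Q"
    and r: "r > 0"
    and \<beta>pos: "\<And>n. \<beta> n > 0"
    and \<beta>lim: "\<beta> \<longlonglongrightarrow> 1"
    and TQ: "T ` Q \<subseteq> Q"
    and Tlip: "\<And>p q n. p \<in> Q \<Longrightarrow> q \<in> Q \<Longrightarrow> norm (p - q) < r \<Longrightarrow> n \<ge> 1 \<Longrightarrow>
                 norm ((T ^^ n) p - (T ^^ n) q) \<le> \<beta> n * norm (p - q)"
    and q0: "\<exists>q0\<in>Q. asymptotic_radius (\<lambda>n. (T ^^ n) q0) Q < ereal r"
  shows "(\<exists>x\<in>Q. T x = x) \<and> closed {x\<in>Q. T x = x}"
proof -
  have contT: "continuous_on Q T"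
    using r by (rule continuous_on_if_locally_lipschitz) (use Tlip[of _ _ 1] in simp)
  obtain q0 where "q0 \<in> Q" and rad: "asymptotic_radius (\<lambda>n. (T ^^ n) q0) Q < ereal r"
    using q0 by blast
  then obtain \<rho> where \<rho>: "asymptotic_radius (\<lambda>n. (T ^^ n) q0) Q = ereal \<rho>" and "\<rho> < r"
    using asymptotic_radius_nonneg[of "\<lambda>n. (T ^^ n) q0" Q]
    by (cases "asymptotic_radius (\<lambda>n. (T ^^ n) q0) Q") auto
  obtain z where "z \<in> Q" and z: "asymptotic_radius_at (\<lambda>n. (T ^^ n) q0) z = ereal \<rho>"
    using asymptotic_center_exists[OF ucs Q(3,4) \<rho>] by blast
  have "(\<lambda>m. (T ^^ m) z) \<longlonglongrightarrow> z"
    using iterates_tendsto_asymptotic_center[OF ucs Q(4) TQ \<open>q0 \<in> Q\<close> \<open>z \<in> Q\<close> \<open>\<rho> < r\<close> \<rho> z _ \<beta>lim Tlip]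
      \<beta>pos by (simp add: less_imp_le)
  then have "T z = z"
    by (rule fixpoint_if_iterates_tendsto[OF contT TQ \<open>z \<in> Q\<close> \<open>z \<in> Q\<close>])
  with \<open>z \<in> Q\<close> closed_fixpoints[OF contT Q(3)] show ?thesis
    by blast
qed

end
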